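(* Consider the $T$-round online first-price auction problem described in the context. For any $V_T\in\left[\frac{36}{T},\frac{T}{4}\right]$, \[ \inf_{\pi\in\Pi}\ \sup_{(v_t,m_t)_{t=1}^T\in\mathcal{V}}\mathbb{E}[\mathrm{DR}_T(\pi)]\ge\frac{\sqrt{TV_T}}{16}. \]
   Context: Online first-price auction over $T$ rounds: at each round $t$ the learner observes a private value $v_t\in[0,1]$, submits a bid $b_t\in[0,1]$, then observes $m_t\in[0,1]$, the highest bid of the other bidders, and receives reward $r(b_t;v_t,m_t)$ with $r(b;v,m)\coloneqq(v-b)\mathbbm{1}(b\ge m)$. An admissible policy $\pi\in\Pi$ is a sequence of measurable functions $\pi_t$ with $b_t=\pi_t((v_s,m_s)_{s=1}^{t-1},v_t,U)$, where $U$ is the learner's internal random variable. The expected dynamic regret is $\mathbb{E}[\mathrm{DR}_T(\pi)]\coloneqq\sum_{t=1}^T\max\{v_t-m_t,0\}-\sum_{t=1}^T\mathbb{E}[r(b_t;v_t,m_t)]$. $\mathcal{V}\coloneqq\{(v_t,m_t)_{t=1}^T\in[0,1]^{2T}:\sum_{t=2}^T|m_t-m_{t-1}|\le V_T\}$. *)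

theory Defs
  imports "HOL-Probability.Probability"
begin

definition fpa_reward :: "real \<Rightarrow> real \<Rightarrow> real \<Rightarrow> real" where
  "fpa_reward b v m = (if m \<le> b then v - b else 0)"

text \<open>A policy: pi t hist v u is the bid at round t given the history
  hist = [(v_1,m_1),...,(v_{t-1},m_{t-1})], the current value v and the
  realisation u of the learner's internal random variable U, distributed
  according to the probability measure M.\<close>
type_synonym 'u policy = "nat \<Rightarrow> (real \<times> real) list \<Rightarrow> real \<Rightarrow> 'u \<Rightarrow> real"

definition admissible_policy :: "'u measure \<Rightarrow> 'u policy \<Rightarrow> bool" where
  "admissible_policy M \<pi> \<longleftrightarrow>
     (\<forall>t hist v. \<pi> t hist v \<in> borel_measurable M) \<and>
     (\<forall>t hist v. \<forall>u\<in>space M. \<pi> t hist v u \<in> {0..1})"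

text \<open>Bid at round t (rounds indexed 1..T).\<close>
definition bid :: "'u policy \<Rightarrow> (nat \<Rightarrow> real) \<Rightarrow> (nat \<Rightarrow> real) \<Rightarrow> nat \<Rightarrow> 'u \<Rightarrow> real" where
  "bid \<pi> v m t u = \<pi> t (map (\<lambda>s. (v s, m s)) [1..<t]) (v t) u"

definition exp_dyn_regret ::
  "'u measure \<Rightarrow> 'u policy \<Rightarrow> nat \<Rightarrow> (nat \<Rightarrow> real) \<Rightarrow> (nat \<Rightarrow> real) \<Rightarrow> real" where
  "exp_dyn_regret M \<pi> T v m =
     (\<Sum>t=1..T. max (v t - m t) 0)
     - (\<Sum>t=1..T. \<integral>u. fpa_reward (bid \<pi> v m t u) (v t) (m t) \<partial>M)"

definition adv_class :: "nat \<Rightarrow> real \<Rightarrow> ((nat \<Rightarrow> real) \<times> (nat \<Rightarrow> real)) set" where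
  "adv_class T V = {(v, m). (\<forall>t\<in>{1..T}. v t \<in> {0..1} \<and> m t \<in> {0..1}) \<and>
                            (\<Sum>t=2..T. \<bar>m t - m (t - 1)\<bar>) \<le> V}"

end

theory Submission
  imports Defs
begin

text \<open>Take all values equal to 1 and let the adversary, who knows the policy, keep the competing
  bid at 1/4 except for occasional spikes to 1/4 + \<delta>, with \<delta> = sqrt (T V) / (4 T). Before
  round t it computes the probability q that the learner bids at least 1/4 + \<delta>. If q < 1/2
  and the variation budget allows it, it spikes: the learner then loses with probability at least
  1/2 and regrets at least 1/4. Otherwise the learner either overpays by \<delta> with probability
  q \<ge> 1/2 (regret \<delta>/2) or the budget is exhausted. Hence the regret is at least
  min (T \<delta> / 2) (number of spikes / 4), and both are of order sqrt (T V).\<close>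

lemma total_variation_le_twice_deviation:
  fixes f :: "nat \<Rightarrow> real"
  shows "(\<Sum>t=2..n. \<bar>f t - f (t - 1)\<bar>) \<le> 2 * (\<Sum>t=1..n. \<bar>f t - a\<bar>)"
proof -
  have "(\<Sum>t=2..n. \<bar>f t - f (t - 1)\<bar>) \<le> (\<Sum>t=2..n. \<bar>f t - a\<bar>) + (\<Sum>t=2..n. \<bar>f (t - 1) - a\<bar>)"
    unfolding sum.distrib[symmetric] by (rule sum_mono) linarith
  also have "(\<Sum>t=2..n. \<bar>f t - a\<bar>) \<le> (\<Sum>t=1..n. \<bar>f t - a\<bar>)"
    by (rule sum_mono2) auto
  also have "(\<Sum>t=2..n. \<bar>f (t - 1) - a\<bar>) \<le> (\<Sum>t=1..n. \<bar>f t - a\<bar>)"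
  proof -
    have "(\<Sum>t=2..n. \<bar>f (t - 1) - a\<bar>) = (\<Sum>t\<in>(\<lambda>t. t - 1) ` {2..n}. \<bar>f t - a\<bar>)"
      by (subst sum.reindex) (auto simp: inj_on_def)
    also have "\<dots> \<le> (\<Sum>t=1..n. \<bar>f t - a\<bar>)"
      by (rule sum_mono2) auto
    finally show ?thesis .
  qed
  finally show ?thesis by simp
qed

lemma fpa_reward_le_margin_if_win: "fpa_reward b v c \<le> (v - c) * of_bool (c \<le> b)"
  by (simp add: fpa_reward_def)

lemma fpa_reward_le_margin_minus_overbid:
  assumes "0 \<le> \<delta>" and "\<delta> \<le> v - c"
  shows "fpa_reward b v c \<le> (v - c) - \<delta> * of_bool (c + \<delta> \<le> b)"
  using assms by (auto simp: fpa_reward_def)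

lemma bid_measurable: "admissible_policy M \<pi> \<Longrightarrow> bid \<pi> v m t \<in> borel_measurable M"
  by (simp add: admissible_policy_def bid_def[abs_def])

lemma bid_range: "admissible_policy M \<pi> \<Longrightarrow> \<forall>u\<in>space M. bid \<pi> v m t u \<in> {0..1}"
  by (simp add: admissible_policy_def bid_def)

context prob_space
begin

lemma integrable_of_bool_le:
  fixes B :: "'a \<Rightarrow> real"
  assumes "B \<in> borel_measurable M"
  shows "integrable M (\<lambda>u. of_bool (c \<le> B u) :: real)"
proof (rule integrable_const_bound[where B = 1])
  show "(\<lambda>u. of_bool (c \<le> B u) :: real) \<in> borel_measurable M"
    using assms by measurable
qed simp

lemma integrable_fpa_reward:
  assumes "B \<in> borel_measurable M" and "\<forall>u\<in>space M. B u \<in> {0..1}"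
  shows "integrable M (\<lambda>u. fpa_reward (B u) v c)"
proof (rule integrable_const_bound[where B = "\<bar>v\<bar> + 1"])
  show "AE u in M. norm (fpa_reward (B u) v c) \<le> \<bar>v\<bar> + 1"
    using assms(2) by (intro AE_I2) (auto simp: fpa_reward_def)
  show "(\<lambda>u. fpa_reward (B u) v c) \<in> borel_measurable M"
    unfolding fpa_reward_def using assms(1) by measurable
qed

lemma expected_fpa_reward_ge_minus_one:
  assumes "B \<in> borel_measurable M" and "\<forall>u\<in>space M. B u \<in> {0..1}" and "0 \<le> v"
  shows "-1 \<le> (\<integral>u. fpa_reward (B u) v c \<partial>M)"
  using assms by (intro integral_ge_const integrable_fpa_reward AE_I2) (auto simp: fpa_reward_def)

lemma expected_fpa_reward_le_margin_if_win:
  assumes "B \<in> borel_measurable M" and "\<forall>u\<in>space M. B u \<in> {0..1}"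
  shows "(\<integral>u. fpa_reward (B u) v c \<partial>M) \<le> (v - c) * (\<integral>u. of_bool (c \<le> B u) \<partial>M)"
proof -
  have "(\<integral>u. fpa_reward (B u) v c \<partial>M) \<le> (\<integral>u. (v - c) * of_bool (c \<le> B u) \<partial>M)"
    using assms integrable_of_bool_le
    by (intro integral_mono integrable_fpa_reward integrable_mult_right fpa_reward_le_margin_if_win)
  then show ?thesis by simp
qed

lemma expected_fpa_reward_le_margin_minus_overbid:
  assumes "B \<in> borel_measurable M" and "\<forall>u\<in>space M. B u \<in> {0..1}"
    and "0 \<le> \<delta>" and "\<delta> \<le> v - c"
  shows "(\<integral>u. fpa_reward (B u) v c \<partial>M) \<le> (v - c) - \<delta> * (\<integral>u. of_bool (c + \<delta> \<le> B u) \<partial>M)"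
proof -
  have int: "integrable M (\<lambda>u. \<delta> * of_bool (c + \<delta> \<le> B u) :: real)"
    using integrable_of_bool_le[OF assms(1)] by simp
  have "(\<integral>u. fpa_reward (B u) v c \<partial>M) \<le> (\<integral>u. (v - c) - \<delta> * of_bool (c + \<delta> \<le> B u) \<partial>M)"
  proof (rule integral_mono)
    show "integrable M (\<lambda>u. fpa_reward (B u) v c)"
      using assms(1,2) by (rule integrable_fpa_reward)
    show "integrable M (\<lambda>u. (v - c) - \<delta> * of_bool (c + \<delta> \<le> B u))"
      using int by simp
  qed (use assms(3,4) fpa_reward_le_margin_minus_overbid in blast)
  also have "\<dots> = (v - c) - \<delta> * (\<integral>u. of_bool (c + \<delta> \<le> B u) \<partial>M)"
    using int by (simp add: prob_space)
  finally show ?thesis .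
qed

end

lemma bdd_above_exp_dyn_regret:
  assumes "prob_space M" and "admissible_policy M \<pi>"
  shows "bdd_above ((\<lambda>vm. exp_dyn_regret M \<pi> T (fst vm) (snd vm)) ` adv_class T V)"
proof (rule bdd_aboveI2)
  fix vm assume "vm \<in> adv_class T V"
  then obtain v m where vm: "vm = (v, m)"
    and range: "\<And>t. t \<in> {1..T} \<Longrightarrow> v t \<in> {0..1} \<and> m t \<in> {0..1}"
    by (auto simp: adv_class_def)
  have "(\<Sum>t=1..T. max (v t - m t) 0) \<le> (\<Sum>t=1..T. 1)"
    using range by (intro sum_mono) fastforce
  moreover have "(\<Sum>t=1..T. -1) \<le> (\<Sum>t=1..T. \<integral>u. fpa_reward (bid \<pi> v m t u) (v t) (m t) \<partial>M)"
    using range bid_measurable[OF assms(2)] bid_range[OF assms(2)]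
    by (intro sum_mono prob_space.expected_fpa_reward_ge_minus_one[OF assms(1)]) auto
  ultimately show "exp_dyn_regret M \<pi> T (fst vm) (snd vm) \<le> 2 * real T"
    by (simp add: vm exp_dyn_regret_def)
qed

locale spike_adversary = prob_space M for M :: "'u measure" +
  fixes \<pi> :: "'u policy" and \<delta> V :: real
  assumes admissible: "admissible_policy M \<pi>"
    and \<delta>_pos: "0 < \<delta>" and \<delta>_le: "\<delta> \<le> 1/4" and V_nonneg: "0 \<le> V"
begin

definition high_bid_prob :: "real list \<Rightarrow> real" where
  "high_bid_prob ms =
     (\<integral>u. of_bool (1/4 + \<delta> \<le> \<pi> (Suc (length ms)) (map (Pair 1) ms) 1 u) \<partial>M)"

lemma high_bid_prob_nonneg: "0 \<le> high_bid_prob ms"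
  by (simp add: high_bid_prob_def)

definition spike_allowed :: "real list \<Rightarrow> nat \<Rightarrow> bool" where
  "spike_allowed ms k \<longleftrightarrow> high_bid_prob ms < 1/2 \<and> 2 * \<delta> * (real k + 1) \<le> V"

primrec history :: "nat \<Rightarrow> real list \<times> nat" where
  "history 0 = ([], 0)"
| "history (Suc n) = (case history n of (ms, k) \<Rightarrow>
     if spike_allowed ms k then (ms @ [1/4 + \<delta>], Suc k) else (ms @ [1/4], k))"

definition spike :: "nat \<Rightarrow> bool" where
  "spike t \<longleftrightarrow> case_prod spike_allowed (history (t - 1))"

definition competing_bid :: "nat \<Rightarrow> real" where
  "competing_bid t = (if spike t then 1/4 + \<delta> else 1/4)"

definition round_regret :: "nat \<Rightarrow> real" where
  "round_regret t = (1 - competing_bid t) -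
     (\<integral>u. fpa_reward (bid \<pi> (\<lambda>_. 1) competing_bid t u) 1 (competing_bid t) \<partial>M)"

lemma history_Suc:
  "history (Suc n) =
     (fst (history n) @ [competing_bid (Suc n)], snd (history n) + of_bool (spike (Suc n)))"
  by (cases "history n") (simp add: spike_def competing_bid_def)

lemma fst_history: "fst (history n) = map competing_bid [1..<Suc n]"
  by (induction n) (simp_all add: history_Suc del: history.simps(2))

lemma snd_history: "real (snd (history n)) = (\<Sum>t=1..n. of_bool (spike t))"
  by (induction n) (simp_all add: history_Suc del: history.simps(2))

lemma snd_history_mono: "n \<le> n' \<Longrightarrow> snd (history n) \<le> snd (history n')"
  by (induction n' rule: dec_induct) (simp_all add: history_Suc del: history.simps(2))

lemma spike_budget: "2 * \<delta> * real (snd (history n)) \<le> V"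
proof (induction n)
  case (Suc n)
  then show ?case
    by (cases "history n") (auto simp: spike_allowed_def algebra_simps)
qed (simp add: V_nonneg)

lemma competing_bid_in_adv_class: "(\<lambda>_. 1, competing_bid) \<in> adv_class T V"
proof -
  have "(\<Sum>t=2..T. \<bar>competing_bid t - competing_bid (t - 1)\<bar>)
      \<le> 2 * (\<Sum>t=1..T. \<bar>competing_bid t - 1/4\<bar>)"
    by (rule total_variation_le_twice_deviation)
  also have "\<dots> = 2 * \<delta> * real (snd (history T))"
  proof -
    have "\<bar>competing_bid t - 1/4\<bar> = \<delta> * of_bool (spike t)" for t
      using \<delta>_pos by (simp add: competing_bid_def)
    then show ?thesis
      by (simp add: snd_history sum_distrib_left)
  qed
  also have "\<dots> \<le> V"
    by (rule spike_budget)
  finally show ?thesis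
    using \<delta>_pos \<delta>_le by (auto simp: adv_class_def competing_bid_def)
qed

lemma exp_dyn_regret_eq_sum_round_regret:
  "exp_dyn_regret M \<pi> T (\<lambda>_. 1) competing_bid = (\<Sum>t=1..T. round_regret t)"
proof -
  have "max (1 - competing_bid t) 0 = 1 - competing_bid t" for t
    using \<delta>_le by (simp add: competing_bid_def)
  then show ?thesis
    by (simp add: exp_dyn_regret_def round_regret_def sum_subtractf)
qed

lemma high_bid_prob_history:
  assumes "1 \<le> t"
  shows "high_bid_prob (fst (history (t - 1)))
    = (\<integral>u. of_bool (1/4 + \<delta> \<le> bid \<pi> (\<lambda>_. 1) competing_bid t u) \<partial>M)"
  using assms by (simp add: high_bid_prob_def fst_history bid_def comp_def)

lemma round_regret_if_spike:
  assumes "1 \<le> t" and "spike t"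
  shows "1/4 \<le> round_regret t"
proof -
  let ?q = "high_bid_prob (fst (history (t - 1)))" and ?b = "bid \<pi> (\<lambda>_. 1) competing_bid t"
  have q: "?q < 1/2"
    using assms(2) by (cases "history (t - 1)") (simp add: spike_def spike_allowed_def)
  have "(\<integral>u. fpa_reward (?b u) 1 (competing_bid t) \<partial>M)
      \<le> (1 - competing_bid t) * (\<integral>u. of_bool (competing_bid t \<le> ?b u) \<partial>M)"
    using admissible by (intro expected_fpa_reward_le_margin_if_win bid_measurable bid_range)
  also have "\<dots> = (1 - competing_bid t) * ?q"
    using assms(2) high_bid_prob_history[OF assms(1)] by (simp add: competing_bid_def)
  finally have "(1 - competing_bid t) * (1 - ?q) \<le> round_regret t"
    by (simp add: round_regret_def algebra_simps)
  moreover have "1/2 \<le> 1 - competing_bid t"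
    using assms(2) \<delta>_le by (simp add: competing_bid_def)
  then have "1/2 * (1/2) \<le> (1 - competing_bid t) * (1 - ?q)"
    using q by (intro mult_mono) auto
  ultimately show ?thesis
    by simp
qed

lemma round_regret_if_no_spike:
  assumes "1 \<le> t" and "\<not> spike t"
  shows "\<delta> * high_bid_prob (fst (history (t - 1))) \<le> round_regret t"
proof -
  let ?b = "bid \<pi> (\<lambda>_. 1) competing_bid t"
  have "(\<integral>u. fpa_reward (?b u) 1 (competing_bid t) \<partial>M)
      \<le> (1 - competing_bid t) - \<delta> * (\<integral>u. of_bool (competing_bid t + \<delta> \<le> ?b u) \<partial>M)"
    using admissible assms(2) \<delta>_pos \<delta>_le
    by (intro expected_fpa_reward_le_margin_minus_overbid bid_measurable bid_range)
       (auto simp: competing_bid_def)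
  also have "\<dots> = (1 - competing_bid t) - \<delta> * high_bid_prob (fst (history (t - 1)))"
    using assms(2) high_bid_prob_history[OF assms(1)] by (simp add: competing_bid_def)
  finally show ?thesis
    by (simp add: round_regret_def)
qed

lemma exp_dyn_regret_ge_min:
  "min (real T * \<delta> / 2) ((V / (2 * \<delta>) - 1) / 4) \<le> exp_dyn_regret M \<pi> T (\<lambda>_. 1) competing_bid"
proof -
  define C where "C = snd (history T)"
  have "min (real T * \<delta> / 2) ((V / (2 * \<delta>) - 1) / 4) \<le> (\<Sum>t=1..T. round_regret t)"
  proof (cases "2 * \<delta> * (real C + 1) \<le> V")
    case True
    have "\<delta> / 2 \<le> round_regret t" if t: "t \<in> {1..T}" for t
    proof (cases "spike t")
      case True
      then show ?thesis
        using round_regret_if_spike[of t] t \<delta>_le by auto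
    next
      case False
      have "snd (history (t - 1)) \<le> C"
        unfolding C_def using t by (intro snd_history_mono) auto
      then have "2 * \<delta> * (real (snd (history (t - 1))) + 1) \<le> 2 * \<delta> * (real C + 1)"
        using \<delta>_pos by (intro mult_left_mono) auto
      then have "1/2 \<le> high_bid_prob (fst (history (t - 1)))"
        using True False by (cases "history (t - 1)") (auto simp: spike_def spike_allowed_def)
      then have "\<delta> * (1/2) \<le> \<delta> * high_bid_prob (fst (history (t - 1)))"
        using \<delta>_pos by (intro mult_left_mono) auto
      then show ?thesis
        using round_regret_if_no_spike[of t] t False by simp
    qed
    then have "(\<Sum>t=1..T. \<delta> / 2) \<le> (\<Sum>t=1..T. round_regret t)"
      by (rule sum_mono)
    then show ?thesis
      by simp
  next
    case False
    have "of_bool (spike t) / 4 \<le> round_regret t" if t: "t \<in> {1..T}" for t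
    proof (cases "spike t")
      case False
      have "0 \<le> \<delta> * high_bid_prob (fst (history (t - 1)))"
        using \<delta>_pos high_bid_prob_nonneg by simp
      then show ?thesis
        using round_regret_if_no_spike[of t] t False by simp
    qed (use round_regret_if_spike[of t] t in auto)
    then have "real C / 4 \<le> (\<Sum>t=1..T. round_regret t)"
      unfolding C_def snd_history sum_divide_distrib by (rule sum_mono)
    moreover have "V / (2 * \<delta>) < real C + 1"
      using False \<delta>_pos by (simp add: divide_less_eq mult.commute)
    ultimately show ?thesis
      by (simp add: min.coboundedI2)
  qed
  then show ?thesis
    by (simp add: exp_dyn_regret_eq_sum_round_regret)
qed

end

theorem theorem4:
  fixes T :: nat and V :: real and M :: "'u measure" and \<pi> :: "'u policy"
  assumes "T \<ge> 1"
    and "36 / real T \<le> V" and "V \<le> real T / 4"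
    and "prob_space M"
    and "admissible_policy M \<pi>"
  shows "sqrt (real T * V) / 16 \<le>
           (SUP vm\<in>adv_class T V. exp_dyn_regret M \<pi> T (fst vm) (snd vm))"
proof -
  define s where "s = sqrt (real T * V)"
  define \<delta> where "\<delta> = s / (4 * real T)"
  have T: "1 \<le> real T"
    using assms(1) by simp
  have "6\<^sup>2 \<le> real T * V"
    using assms(2) T by (simp add: divide_le_eq mult.commute)
  then have s6: "6 \<le> s" and ss: "s * s = real T * V"
    unfolding s_def by (auto intro: real_le_rsqrt)
  have "real T * V \<le> (real T / 2)\<^sup>2"
    using assms(3) T by (simp add: power2_eq_square)
  then have sT: "s \<le> real T / 2"
    unfolding s_def by (intro real_le_lsqrt) simp_all
  have "0 < \<delta>" and "\<delta> \<le> 1/4" and "0 \<le> V"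
    using s6 sT T assms(2) by (simp_all add: \<delta>_def divide_le_eq order.trans[OF _ assms(2)])
  then interpret spike_adversary M \<pi> \<delta> V
    using assms(4,5) by (simp add: spike_adversary_def spike_adversary_axioms_def)
  have "V / (2 * \<delta>) = 2 * s"
    using ss s6 T by (simp add: \<delta>_def field_simps)
  then have "s / 16 \<le> min (real T * \<delta> / 2) ((V / (2 * \<delta>) - 1) / 4)"
    using s6 T by (simp add: \<delta>_def)
  also have "\<dots> \<le> exp_dyn_regret M \<pi> T (\<lambda>_. 1) competing_bid"
    by (rule exp_dyn_regret_ge_min)
  finally show ?thesis
    unfolding s_def
    by (intro cSUP_upper2[OF bdd_above_exp_dyn_regret[OF assms(4,5)] competing_bid_in_adv_class])
       simp
qed

end
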